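(* Let $d=2$ and let $\Omega_{\mathrm O},\Omega_{\mathrm I}$ satisfy assumptions (1)–(4). If $\Omega_{\mathrm I}$ is path-connected, then assumption (5) also holds.
   Context: $\Omega_{\mathrm O}\subset\mathbb R^2$ is a nonempty open strictly convex set and $\Omega_{\mathrm I}\subset\Omega_{\mathrm O}$ is a closed set; $\operatorname{conv}$, $\operatorname{int}$, $\operatorname{cl}$, $\partial$ denote convex hull, interior, closure, boundary. A ray is a set $\{x+te: t\ge0\}$ with $e\ne0$. Assumptions: (1) $\partial\operatorname{conv}\Omega_{\mathrm I}$ contains no rays; (2) $\operatorname{cl}\operatorname{conv}\Omega_{\mathrm I}\subset\Omega_{\mathrm O}$; (3) $\operatorname{int}\operatorname{conv}\Omega_{\mathrm I}\ne\varnothing$ and $\Omega_{\mathrm O}$ and $\operatorname{conv}\Omega_{\mathrm I}$ have congruent maximal inscribed cones (the set of directions $e$ such that some ray $\{x+te:t\ge0\}$ is contained in the set is the same for both sets); (4) the set $(\operatorname{int}\operatorname{conv}\Omega_{\mathrm I})\setminus\Omega_{\mathrm I}$ is a locally finite union of its connected components $\omega_j$ (every bounded set meets only finitely many $\omega_j$); (5) for every $j$ there is a supporting line $L_j$ to $\operatorname{conv}\Omega_{\mathrm I}$ that contains $E_j:=\partial\omega_j\setminus\Omega_{\mathrm I}$. *)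

theory Defs
  imports "HOL-Analysis.Analysis"
begin

definition strictly_convex :: "(real^2) set \<Rightarrow> bool" where
  "strictly_convex S \<longleftrightarrow> convex S \<and> S \<noteq> UNIV \<and>
     (\<forall>x\<in>closure S. \<forall>y\<in>closure S. x \<noteq> y \<longrightarrow> open_segment x y \<subseteq> interior S)"

definition ray :: "real^2 \<Rightarrow> real^2 \<Rightarrow> (real^2) set" where
  "ray x e = {x + t *\<^sub>R e | t. t \<ge> 0}"

definition ray_directions :: "(real^2) set \<Rightarrow> (real^2) set" where
  "ray_directions S = {e. e \<noteq> 0 \<and> (\<exists>x. ray x e \<subseteq> S)}"

definition supporting_line :: "(real^2) set \<Rightarrow> (real^2) set \<Rightarrow> bool" where
  "supporting_line L C \<longleftrightarrow> (\<exists>a b. a \<noteq> 0 \<and> L = {x. a \<bullet> x = b} \<and> (\<forall>x\<in>C. a \<bullet> x \<le> b)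
      \<and> L \<inter> closure C \<noteq> {})"

end

theory Submission
  imports Defs
begin

text \<open>Let \<open>w\<close> be a component of \<open>int conv \<Omega>\<^sub>I - \<Omega>\<^sub>I\<close> and \<open>p \<in> \<partial>w - \<Omega>\<^sub>I\<close>. Then \<open>p\<close> lies on
  the boundary of \<open>conv \<Omega>\<^sub>I\<close>; let \<open>L\<close> be a supporting line at \<open>p\<close>. Since that boundary
  contains no ray, \<open>\<Omega>\<^sub>I\<close> meets \<open>L\<close> on both sides of \<open>p\<close>; let \<open>t\<^sub>1, t\<^sub>2\<close> be the nearest
  such points. An arc in the path-connected set \<open>\<Omega>\<^sub>I\<close> from \<open>t\<^sub>1\<close> to \<open>t\<^sub>2\<close> closes up with the
  chord \<open>[t\<^sub>1, t\<^sub>2]\<close> to a Jordan curve whose inner domain lies in \<open>conv \<Omega>\<^sub>I\<close> and contains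
  \<open>w\<close>. Hence every point of \<open>\<partial>w - \<Omega>\<^sub>I\<close> lies on the chord, i.e. on \<open>L\<close>.\<close>

lemma unit_orthogonal_frame_2:
  fixes a :: "real^2"
  assumes "norm a = 1"
  obtains u where "a \<bullet> u = 0" "norm u = 1" "\<And>x. x = (a \<bullet> x) *\<^sub>R a + (u \<bullet> x) *\<^sub>R u"
proof -
  define u :: "real^2" where "u = (\<chi> i. if i = 1 then - (a$2) else a$1)"
  have n: "a$1 * a$1 + a$2 * a$2 = 1"
    using assms unfolding norm_eq_1 inner_vec_def by (simp add: sum_2)
  have "a \<bullet> u = 0" by (simp add: u_def inner_vec_def sum_2 algebra_simps)
  moreover have "norm u = 1" using n by (simp add: norm_eq_1 u_def inner_vec_def sum_2 algebra_simps)
  moreover have "x = (a \<bullet> x) *\<^sub>R a + (u \<bullet> x) *\<^sub>R u" for x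
    unfolding vec_eq_iff forall_2 using n
    by (simp add: u_def inner_vec_def sum_2 algebra_simps) (intro conjI; algebra)
  ultimately show thesis using that by blast
qed

lemma pythagoras_frame:
  fixes a v y :: "'a::real_inner"
  assumes "norm a = 1" "norm v = 1" "a \<bullet> v = 0" "y = (a \<bullet> y) *\<^sub>R a + (v \<bullet> y) *\<^sub>R v"
  shows "(norm y)\<^sup>2 = (a \<bullet> y)\<^sup>2 + (v \<bullet> y)\<^sup>2"
proof -
  have "a \<bullet> a = 1" "v \<bullet> v = 1" using assms(1,2) by (simp_all add: norm_eq_1)
  then have "y \<bullet> y = (a \<bullet> y)\<^sup>2 + (v \<bullet> y)\<^sup>2"
    using assms(3) assms(4)[symmetric]
    by (metis inner_add_right inner_scaleR_right inner_commute power2_eq_square)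
  then show ?thesis by (simp add: power2_norm_eq_inner)
qed

lemma exists_unit_support_normal:
  fixes C :: "'a::euclidean_space set"
  assumes "convex C" "interior C \<noteq> {}" "p \<in> frontier C"
  obtains a where "norm a = 1" "\<And>x. x \<in> closure C \<Longrightarrow> a \<bullet> x \<le> a \<bullet> p"
proof -
  have "p \<in> closure C" "p \<notin> rel_interior C"
    using assms(3) rel_interior_nonempty_interior[OF assms(2)] by (auto simp: frontier_def)
  then obtain b where "b \<noteq> 0" "\<And>y. y \<in> closure C \<Longrightarrow> b \<bullet> p \<le> b \<bullet> y"
    using supporting_hyperplane_relative_frontier[OF assms(1)] by metis
  then show thesis
    using that[of "- sgn b"] by (simp add: norm_sgn sgn_div_norm divide_right_mono)
qed

lemma supporting_lineI:
  assumes "a \<noteq> 0" "\<And>x. x \<in> C \<Longrightarrow> a \<bullet> x \<le> a \<bullet> p" "p \<in> closure C"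
  shows "supporting_line {x. a \<bullet> x = a \<bullet> p} C"
  unfolding supporting_line_def using assms by blast

lemma interior_below_support:
  fixes K :: "'a::euclidean_space set"
  assumes "a \<noteq> 0" "\<And>x. x \<in> K \<Longrightarrow> a \<bullet> x \<le> \<beta>" "x \<in> interior K"
  shows "a \<bullet> x < \<beta>"
proof -
  have "interior K \<subseteq> interior {x. a \<bullet> x \<le> \<beta>}" using assms(2) by (intro interior_mono) auto
  with assms(1,3) show ?thesis by auto
qed

lemma frontier_component_diff_subset_frontier:
  fixes C S :: "'a::real_normed_vector set"
  assumes "closed S" "w \<in> components (interior C - S)"
  shows "frontier w - S \<subseteq> frontier C"
proof -
  have "open (interior C - S)" using \<open>closed S\<close> by (simp add: open_Diff)
  moreover have "closure (interior C - S) \<subseteq> closure C"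
    using interior_subset by (intro closure_mono) blast
  ultimately show ?thesis
    using frontier_of_components_subset[OF assms(2)] by (auto simp: frontier_def interior_open)
qed

lemma closed_segment_along_direction:
  fixes p u :: "'a::real_vector"
  assumes "l \<le> h"
  shows "closed_segment (p + l *\<^sub>R u) (p + h *\<^sub>R u) = (\<lambda>s. p + s *\<^sub>R u) ` {l..h}"
proof -
  have "closed_segment (l *\<^sub>R u) (h *\<^sub>R u) = (\<lambda>s. s *\<^sub>R u) ` closed_segment l h"
    by (rule closed_segment_linear_image) (rule linear_scaleR_left)
  then show ?thesis
    using assms by (simp add: closed_segment_translation closed_segment_eq_real_ivl image_image)
qed

lemma closed_real_gap_around:
  fixes I :: "real set"
  assumes "closed I" "x \<notin> I" "\<exists>s\<in>I. s < x" "\<exists>s\<in>I. x < s"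
  obtains l h where "l \<in> I" "h \<in> I" "l < x" "x < h" "{l<..<h} \<inter> I = {}"
proof
  define l where "l = Sup (I \<inter> {..x})"
  define h where "h = Inf (I \<inter> {x..})"
  have ne: "I \<inter> {..x} \<noteq> {}" "I \<inter> {x..} \<noteq> {}" using assms(3,4) by force+
  have bdd: "bdd_above (I \<inter> {..x})" "bdd_below (I \<inter> {x..})"
    by (auto intro: bdd_aboveI[of _ x] bdd_belowI[of _ x])
  have "l \<in> I \<inter> {..x}" unfolding l_def
    by (intro closed_contains_Sup ne bdd closed_Int assms(1) closed_atMost)
  then show "l \<in> I" "l < x" using assms(2) by (auto simp: le_less)
  have "h \<in> I \<inter> {x..}" unfolding h_def
    by (intro closed_contains_Inf ne bdd closed_Int assms(1) closed_atLeast)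
  then show "h \<in> I" "x < h" using assms(2) by (auto simp: le_less)
  show "{l<..<h} \<inter> I = {}"
  proof (rule ccontr)
    assume "{l<..<h} \<inter> I \<noteq> {}"
    then obtain s where s: "s \<in> I" "l < s" "s < h" by auto
    show False
    proof (cases "s \<le> x")
      case True
      then have "s \<le> l" unfolding l_def using s(1) bdd(1) by (intro cSup_upper) auto
      with s(2) show False by simp
    next
      case False
      then have "h \<le> s" unfolding h_def using s(1) bdd(2) by (intro cInf_lower) auto
      with s(3) show False by simp
    qed
  qed
qed

lemma closure_convex_hull_meets_halfspace:
  fixes S :: "'a::real_inner set"
  assumes "p \<in> closure (convex hull S)" "\<beta> < c \<bullet> p"
  shows "\<exists>z\<in>S. \<beta> < c \<bullet> z"
proof (rule ccontr)
  assume "\<not> ?thesis"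
  then have "S \<subseteq> {z. c \<bullet> z \<le> \<beta>}" by (auto simp: not_less)
  then have "closure (convex hull S) \<subseteq> {z. c \<bullet> z \<le> \<beta>}"
    by (intro closure_minimal hull_minimal convex_halfspace_le closed_halfspace_le)
  with assms show False by auto
qed

lemma closed_convex_halfline_subset:
  fixes K :: "'a::real_normed_vector set"
  assumes "closed K" "convex K" "p \<in> K"
    and asym: "\<And>\<epsilon> M. \<epsilon> > 0 \<Longrightarrow> \<exists>z\<in>K. M \<le> norm (z - p) \<and> norm (sgn (z - p) - v) < \<epsilon>"
  shows "{p + t *\<^sub>R v | t. t \<ge> 0} \<subseteq> K"
proof clarify
  fix t :: real assume "t \<ge> 0"
  show "p + t *\<^sub>R v \<in> K"
  proof (cases "t = 0")
    case True then show ?thesis using \<open>p \<in> K\<close> by simp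
  next
    case False
    with \<open>t \<ge> 0\<close> have t: "t > 0" by simp
    have "\<exists>y\<in>K. dist y (p + t *\<^sub>R v) < e" if "e > 0" for e
    proof -
      obtain z where z: "z \<in> K" "t \<le> norm (z - p)" "norm (sgn (z - p) - v) < e / t"
        using asym[of "e / t" t] \<open>e > 0\<close> t by auto
      define R where "R = norm (z - p)"
      have R: "R > 0" "t / R \<le> 1" using z(2) t by (auto simp: R_def divide_le_eq_1)
      define y where "y = p + (t / R) *\<^sub>R (z - p)"
      have "y = (1 - t / R) *\<^sub>R p + (t / R) *\<^sub>R z" by (simp add: y_def algebra_simps)
      then have "y \<in> K"
        using convexD_alt[OF \<open>convex K\<close> \<open>p \<in> K\<close> \<open>z \<in> K\<close>] R t by simp
      moreover have "y - (p + t *\<^sub>R v) = t *\<^sub>R (sgn (z - p) - v)"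
        by (simp add: y_def sgn_div_norm R_def[symmetric] scaleR_diff_right divide_inverse)
      then have "dist y (p + t *\<^sub>R v) = t * norm (sgn (z - p) - v)"
        using t unfolding dist_norm by simp
      then have "dist y (p + t *\<^sub>R v) < e"
        using z(3) t by (simp add: field_simps)
      ultimately show ?thesis by blast
    qed
    then show ?thesis using closed_approachable[OF \<open>closed K\<close>] by blast
  qed
qed

lemma norm_sgn_diff_lt_if_tilted:
  fixes a v y :: "'a::real_inner"
  assumes v: "norm v = 1" and pyth: "(norm y)\<^sup>2 = (a \<bullet> y)\<^sup>2 + (v \<bullet> y)\<^sup>2"
    and below: "a \<bullet> y \<le> 0" and tilted: "a \<bullet> y + \<kappa> * (v \<bullet> y + r / 2) > 0"
    and \<kappa>: "0 < \<kappa>" "\<kappa> \<le> 1 / 4" and r: "0 < r" "r < norm y"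
  shows "norm (sgn y - v) < 3 * \<kappa>"
proof -
  define R A B where "R = norm y" and "A = a \<bullet> y" and "B = v \<bullet> y"
  have R: "R > 0" "r < R" using r by (auto simp: R_def)
  have pyth': "R\<^sup>2 = A\<^sup>2 + B\<^sup>2" using pyth by (simp add: R_def A_def B_def)
  have "\<bar>B\<bar> \<le> R" using Cauchy_Schwarz_ineq2[of v y] v by (simp add: R_def B_def)
  have "\<kappa> * (B + r / 2) > 0" using below tilted by (simp add: A_def B_def)
  then have "B + r / 2 > 0" using \<kappa> by (simp add: zero_less_mult_iff)
  have absA: "\<bar>A\<bar> \<le> \<kappa> * (3 / 2 * R)"
  proof -
    have "\<bar>A\<bar> < \<kappa> * (B + r / 2)" using below tilted by (simp add: A_def B_def)
    also have "\<dots> \<le> \<kappa> * (3 / 2 * R)" using \<open>\<bar>B\<bar> \<le> R\<close> R \<kappa> by (intro mult_left_mono) auto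
    finally show ?thesis by simp
  qed
  then have A2: "A\<^sup>2 \<le> 9 / 4 * \<kappa>\<^sup>2 * R\<^sup>2"
    using power_mono[OF absA abs_ge_zero, of 2] by (simp add: power2_eq_square algebra_simps)
  also have "\<dots> \<le> 9 / 4 * (1 / 4)\<^sup>2 * R\<^sup>2"
    using \<kappa> by (intro mult_right_mono mult_left_mono power_mono) auto
  finally have "A\<^sup>2 \<le> 9 / 64 * R\<^sup>2" by (simp add: power2_eq_square)
  have "B > 0"
  proof (rule ccontr)
    assume "\<not> B > 0"
    then have "\<bar>B\<bar> < R / 2" using \<open>B + r / 2 > 0\<close> R by auto
    then have "B\<^sup>2 < (R / 2)\<^sup>2" using power_strict_mono[of "\<bar>B\<bar>" "R / 2" 2] by simp
    moreover have "(R / 2)\<^sup>2 = R\<^sup>2 / 4" by (simp add: power_divide)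
    ultimately show False using pyth' \<open>A\<^sup>2 \<le> 9 / 64 * R\<^sup>2\<close> zero_le_power2[of A] by linarith
  qed
  have "(R - B) * R \<le> A\<^sup>2"
  proof -
    have "(R - B) * (R + B) = A\<^sup>2" using pyth' by (simp add: algebra_simps power2_eq_square)
    moreover have "0 \<le> R - B" using \<open>\<bar>B\<bar> \<le> R\<close> by simp
    ultimately show ?thesis using \<open>B > 0\<close> by (metis add_increasing2 less_imp_le mult_left_mono order.refl)
  qed
  have "(norm (sgn y - v))\<^sup>2 = sgn y \<bullet> sgn y - 2 * (sgn y \<bullet> v) + v \<bullet> v"
    by (simp add: power2_norm_eq_inner inner_diff_left inner_diff_right inner_commute)
  also have "\<dots> = 2 * (R - B) / R"
    using R v r power2_norm_eq_inner[of y, folded R_def]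
    by (auto simp: sgn_div_norm R_def[symmetric] B_def inner_commute[of y v] norm_eq_1
        power2_eq_square field_simps)
  also have "\<dots> = 2 * ((R - B) * R) / R\<^sup>2" using R by (simp add: power2_eq_square)
  also have "\<dots> \<le> 2 * A\<^sup>2 / R\<^sup>2"
    using \<open>(R - B) * R \<le> A\<^sup>2\<close> by (simp add: divide_right_mono)
  also have "\<dots> \<le> 9 / 2 * \<kappa>\<^sup>2" using A2 R by (simp add: field_simps)
  also have "\<dots> < (3 * \<kappa>)\<^sup>2" using \<kappa> by (simp add: power2_eq_square)
  finally show ?thesis using power2_less_imp_less[of "norm (sgn y - v)" "3 * \<kappa>"] \<kappa> by simp
qed

lemma compact_uniformly_negative:
  fixes f :: "'a::topological_space \<Rightarrow> real"
  assumes "compact Q" "continuous_on Q f" "\<And>z. z \<in> Q \<Longrightarrow> f z < 0"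
  obtains \<delta> where "\<delta> > 0" "\<And>z. z \<in> Q \<Longrightarrow> f z \<le> - \<delta>"
proof (cases "Q = {}")
  case True then show ?thesis using that[of 1] by simp
next
  case False
  then obtain z0 where "z0 \<in> Q" "\<And>z. z \<in> Q \<Longrightarrow> f z \<le> f z0"
    using continuous_attains_sup[OF assms(1) False assms(2)] by blast
  then show ?thesis using that[of "- f z0"] assms(3) by force
qed

lemma tilted_violators_far:
  fixes S :: "'a::euclidean_space set"
  assumes "closed S" and v: "norm v = 1" and pyth: "\<And>y. (norm y)\<^sup>2 = (a \<bullet> y)\<^sup>2 + (v \<bullet> y)\<^sup>2"
    and below: "\<And>z. z \<in> S \<Longrightarrow> a \<bullet> (z - p) \<le> 0"
    and on_line: "\<And>z. z \<in> S \<Longrightarrow> a \<bullet> (z - p) = 0 \<Longrightarrow> v \<bullet> (z - p) \<le> 0"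
    and r: "r > 0" "\<And>z. z \<in> S \<Longrightarrow> r \<le> norm (z - p)"
  obtains \<kappa>\<^sub>0 where "\<kappa>\<^sub>0 > 0"
    "\<And>\<kappa> z. \<lbrakk>0 < \<kappa>; \<kappa> \<le> \<kappa>\<^sub>0; z \<in> S; a \<bullet> (z - p) + \<kappa> * (v \<bullet> (z - p) + r / 2) > 0\<rbrakk>
       \<Longrightarrow> M < norm (z - p)"
proof -
  define Q where "Q = S \<inter> cball p M \<inter> {z. - r / 2 \<le> v \<bullet> (z - p)}"
  have "Q = S \<inter> cball p M \<inter> {z. v \<bullet> p - r / 2 \<le> v \<bullet> z}"
    by (auto simp: Q_def inner_diff_right)
  then have "compact Q"
    by (metis \<open>closed S\<close> closed_Int_compact closed_halfspace_ge compact_Int_closed compact_cball)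
  have neg: "a \<bullet> (z - p) < 0" if "z \<in> Q" for z
  proof (rule ccontr)
    assume "\<not> a \<bullet> (z - p) < 0"
    with below that have "a \<bullet> (z - p) = 0" by (force simp: Q_def)
    with on_line that have "- r / 2 \<le> v \<bullet> (z - p)" "v \<bullet> (z - p) \<le> 0" by (auto simp: Q_def)
    moreover have "(norm (z - p))\<^sup>2 = (v \<bullet> (z - p))\<^sup>2" using pyth \<open>a \<bullet> (z - p) = 0\<close> by simp
    ultimately have "norm (z - p) \<le> r / 2" by (auto simp: power2_eq_iff)
    with r that show False by (force simp: Q_def)
  qed
  have "continuous_on Q (\<lambda>z. a \<bullet> (z - p))" by (intro continuous_intros)
  then obtain \<delta> where \<delta>: "\<delta> > 0" "\<And>z. z \<in> Q \<Longrightarrow> a \<bullet> (z - p) \<le> - \<delta>"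
    using compact_uniformly_negative[OF \<open>compact Q\<close>] neg by blast
  show thesis
  proof
    show "\<delta> / (\<bar>M\<bar> + r + 1) > 0" using \<delta> r by simp
  next
    fix \<kappa> z
    assume \<kappa>: "0 < \<kappa>" "\<kappa> \<le> \<delta> / (\<bar>M\<bar> + r + 1)" and "z \<in> S"
      and tilted: "a \<bullet> (z - p) + \<kappa> * (v \<bullet> (z - p) + r / 2) > 0"
    show "M < norm (z - p)"
    proof (rule ccontr)
      assume "\<not> M < norm (z - p)"
      then have "norm (z - p) \<le> M" by simp
      have "0 < v \<bullet> (z - p) + r / 2"
        using tilted below[OF \<open>z \<in> S\<close>] \<kappa> by (smt (verit) mult_nonneg_nonpos)
      with \<open>z \<in> S\<close> \<open>norm (z - p) \<le> M\<close> have "z \<in> Q" by (simp add: Q_def dist_norm norm_minus_commute)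
      have "v \<bullet> (z - p) \<le> norm (z - p)" using norm_cauchy_schwarz[of v "z - p"] v by simp
      then have "\<kappa> * (v \<bullet> (z - p) + r / 2) \<le> \<delta> / (\<bar>M\<bar> + r + 1) * (\<bar>M\<bar> + r + 1)"
        using \<kappa> \<open>norm (z - p) \<le> M\<close> \<open>0 < v \<bullet> (z - p) + r / 2\<close> r by (intro mult_mono) auto
      also have "\<dots> = \<delta>" using r by simp
      finally show False using tilted \<delta>(2)[OF \<open>z \<in> Q\<close>] by linarith
    qed
  qed
qed

text \<open>Tilt the supporting line about \<open>p - (r/2) v\<close>, where \<open>ball p r\<close> misses \<open>S\<close>. If some tilt
  keeps \<open>S\<close> on one side, the tilted half-plane contains \<open>K\<close> but not \<open>p\<close>. Otherwise points of
  \<open>S\<close> violating ever smaller tilts escape to infinity in direction \<open>v\<close>, forcing the ray into \<open>K\<close>.\<close>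

lemma support_line_meets_set_beyond:
  fixes S :: "(real^2) set"
  defines "K \<equiv> closure (convex hull S)"
  assumes "closed S" "p \<in> K" "p \<notin> S"
    and supp: "\<And>x. x \<in> K \<Longrightarrow> a \<bullet> x \<le> a \<bullet> p"
    and frame: "norm a = 1" "a \<bullet> v = 0" "norm v = 1" "\<And>x. x = (a \<bullet> x) *\<^sub>R a + (v \<bullet> x) *\<^sub>R v"
    and no_ray: "\<not> ray p v \<subseteq> K"
  shows "\<exists>s>0. p + s *\<^sub>R v \<in> S"
proof (rule ccontr)
  assume none: "\<not> ?thesis"
  have K: "closed K" "convex K" "S \<subseteq> K"
    unfolding K_def by auto (meson closure_subset hull_subset subsetD)
  have pyth: "(norm y)\<^sup>2 = (a \<bullet> y)\<^sup>2 + (v \<bullet> y)\<^sup>2" for y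
    using pythagoras_frame frame by blast
  have below: "a \<bullet> (z - p) \<le> 0" if "z \<in> K" for z
    using supp[OF that] by (simp add: inner_diff_right)
  have on_line: "v \<bullet> (z - p) \<le> 0" if "z \<in> S" "a \<bullet> (z - p) = 0" for z
  proof (rule ccontr)
    assume "\<not> v \<bullet> (z - p) \<le> 0"
    moreover have "z = p + (v \<bullet> (z - p)) *\<^sub>R v"
      using frame(4)[of "z - p"] that(2) by (simp add: algebra_simps)
    ultimately show False using none that(1) by (metis not_le)
  qed
  obtain r where r: "r > 0" "\<And>z. z \<in> S \<Longrightarrow> r \<le> norm (z - p)"
  proof -
    obtain r where "r > 0" "ball p r \<subseteq> - S"
      using \<open>closed S\<close> \<open>p \<notin> S\<close> open_contains_ball[of "- S"] by (auto simp: open_Compl)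
    then show ?thesis using that[of r] by (force simp: dist_norm norm_minus_commute not_less)
  qed
  have violator: "\<exists>z\<in>S. a \<bullet> (z - p) + \<kappa> * (v \<bullet> (z - p) + r / 2) > 0" if "\<kappa> > 0" for \<kappa>
  proof -
    have "(a + \<kappa> *\<^sub>R v) \<bullet> p - \<kappa> * r / 2 < (a + \<kappa> *\<^sub>R v) \<bullet> p"
      using mult_pos_pos[OF that r(1)] by simp
    then obtain z where "z \<in> S" "(a + \<kappa> *\<^sub>R v) \<bullet> p - \<kappa> * r / 2 < (a + \<kappa> *\<^sub>R v) \<bullet> z"
      using closure_convex_hull_meets_halfspace \<open>p \<in> K\<close> unfolding K_def by blast
    then show ?thesis by (auto simp: algebra_simps)
  qed
  have "ray p v \<subseteq> K"
    unfolding ray_def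
  proof (rule closed_convex_halfline_subset[OF K(1,2) \<open>p \<in> K\<close>])
    fix \<epsilon> M :: real assume "\<epsilon> > 0"
    obtain \<kappa>\<^sub>0 where \<kappa>\<^sub>0: "\<kappa>\<^sub>0 > 0"
      "\<And>\<kappa> z. \<lbrakk>0 < \<kappa>; \<kappa> \<le> \<kappa>\<^sub>0; z \<in> S; a \<bullet> (z - p) + \<kappa> * (v \<bullet> (z - p) + r / 2) > 0\<rbrakk>
         \<Longrightarrow> max M r < norm (z - p)"
      using tilted_violators_far[OF \<open>closed S\<close> frame(3) pyth below on_line r, of "max M r"] K(3)
      by blast
    define \<kappa> where "\<kappa> = min \<kappa>\<^sub>0 (min (1 / 4) (\<epsilon> / 3))"
    have \<kappa>: "0 < \<kappa>" "\<kappa> \<le> \<kappa>\<^sub>0" "\<kappa> \<le> 1 / 4" "\<kappa> \<le> \<epsilon> / 3"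
      using \<kappa>\<^sub>0(1) \<open>\<epsilon> > 0\<close> by (auto simp: \<kappa>_def)
    obtain z where z: "z \<in> S" "a \<bullet> (z - p) + \<kappa> * (v \<bullet> (z - p) + r / 2) > 0"
      using violator[OF \<kappa>(1)] by blast
    have far: "max M r < norm (z - p)" using \<kappa>\<^sub>0(2)[OF \<kappa>(1,2) z] .
    have "norm (sgn (z - p) - v) < 3 * \<kappa>"
      using norm_sgn_diff_lt_if_tilted[OF frame(3) pyth below z(2) \<kappa>(1,3) r(1)] z(1) K(3) far
      by auto
    then show "\<exists>z\<in>K. M \<le> norm (z - p) \<and> norm (sgn (z - p) - v) < \<epsilon>"
      using z(1) K(3) far \<kappa>(4) by force
  qed
  with no_ray show False ..
qed

lemma support_line_nearest_points:
  fixes S :: "(real^2) set"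
  assumes "closed S" "p \<in> closure (convex hull S)" "p \<notin> S"
    and supp: "\<And>x. x \<in> closure (convex hull S) \<Longrightarrow> a \<bullet> x \<le> a \<bullet> p"
    and frame: "norm a = 1" "a \<bullet> u = 0" "norm u = 1" "\<And>x. x = (a \<bullet> x) *\<^sub>R a + (u \<bullet> x) *\<^sub>R u"
    and no_ray: "\<not> ray p u \<subseteq> closure (convex hull S)" "\<not> ray p (- u) \<subseteq> closure (convex hull S)"
  obtains t1 t2 where "t1 \<in> S" "t2 \<in> S" "t1 \<noteq> t2" "closed_segment t1 t2 \<inter> S \<subseteq> {t1, t2}"
    "closed_segment t1 t2 \<subseteq> {x. a \<bullet> x = a \<bullet> p}" "p \<in> closed_segment t1 t2"
proof -
  define I where "I = {s. p + s *\<^sub>R u \<in> S}"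
  have "closed I" unfolding I_def
    by (rule continuous_closed_vimage[OF \<open>closed S\<close>, unfolded vimage_def]) (intro continuous_intros)
  have "\<exists>s\<in>I. 0 < s"
    using support_line_meets_set_beyond[OF assms(1-3) supp frame no_ray(1)] by (auto simp: I_def)
  moreover have "\<exists>s\<in>I. s < 0"
  proof -
    have "\<exists>s>0. p + s *\<^sub>R - u \<in> S"
      using support_line_meets_set_beyond[OF assms(1-3) supp frame(1), of "- u"] frame(2-4) no_ray(2)
      by simp
    then obtain s where "s > 0" "p + (- s) *\<^sub>R u \<in> S" by auto
    then show ?thesis unfolding I_def by (intro bexI[of _ "- s"]) auto
  qed
  moreover have "0 \<notin> I" using \<open>p \<notin> S\<close> by (simp add: I_def)
  ultimately obtain l h where lh: "l \<in> I" "h \<in> I" "l < 0" "0 < h" "{l<..<h} \<inter> I = {}"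
    using closed_real_gap_around[OF \<open>closed I\<close>] by blast
  define t1 t2 where "t1 = p + l *\<^sub>R u" and "t2 = p + h *\<^sub>R u"
  have seg: "closed_segment t1 t2 = (\<lambda>s. p + s *\<^sub>R u) ` {l..h}"
    unfolding t1_def t2_def using lh by (intro closed_segment_along_direction) simp
  have "u \<noteq> 0" using frame(3) by auto
  then have "t1 \<noteq> t2" using lh by (auto simp: t1_def t2_def)
  moreover have "closed_segment t1 t2 \<inter> S \<subseteq> {t1, t2}"
  proof
    fix x assume "x \<in> closed_segment t1 t2 \<inter> S"
    then obtain s where s: "l \<le> s" "s \<le> h" "s \<in> I" "x = p + s *\<^sub>R u" by (auto simp: seg I_def)
    have "s \<notin> {l<..<h}" using lh(5) s(3) by blast
    with s(1,2) have "s = l \<or> s = h" by auto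
    with s(4) show "x \<in> {t1, t2}" by (auto simp: t1_def t2_def)
  qed
  moreover have "closed_segment t1 t2 \<subseteq> {x. a \<bullet> x = a \<bullet> p}"
    using frame(2) by (auto simp: seg inner_add_right)
  moreover have "p \<in> closed_segment t1 t2" using lh by (force simp: seg)
  moreover have "t1 \<in> S" "t2 \<in> S" using lh by (simp_all add: I_def t1_def t2_def)
  ultimately show thesis using that by blast
qed

lemma Jordan_Brouwer_inside_component:
  fixes J :: "'a::euclidean_space set" and c :: 'a
  assumes hom: "J homeomorphic sphere c r" and "r > 0" and dim: "2 \<le> DIM('a)"
  obtains T where "T \<in> components (- J)" "T \<subseteq> inside J" "frontier T = J"
proof -
  have "compact J" using homeomorphic_compactness[OF hom] by simp
  then have "bounded J" by (rule compact_imp_bounded)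
  then obtain x where x: "x \<in> outside J" using outside_bounded_nonempty by blast
  then have "x \<in> - J" using outside_no_overlap by blast
  define T\<^sub>0 where "T\<^sub>0 = connected_component_set (- J) x"
  have "outside J \<subseteq> T\<^sub>0"
    unfolding T\<^sub>0_def
  proof (rule connected_component_maximal)
    show "connected (outside J)" using connected_outside[OF \<open>bounded J\<close> dim] .
    show "outside J \<subseteq> - J" using outside_no_overlap by blast
  qed (use x in simp)
  have "T\<^sub>0 \<in> components (- J)" unfolding T\<^sub>0_def using \<open>x \<in> - J\<close> by (rule componentsI)
  obtain T where T: "T \<in> components (- J)" "T \<noteq> T\<^sub>0"
  proof (rule ccontr)
    assume "\<not> thesis"
    with that have "components (- J) \<subseteq> {T\<^sub>0}" by blast
    then have "- J = T\<^sub>0" using Union_components[of "- J"] \<open>T\<^sub>0 \<in> components (- J)\<close> by blast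
    moreover have "connected T\<^sub>0" unfolding T\<^sub>0_def by (rule connected_connected_component)
    ultimately show False using Jordan_Brouwer_separation[OF hom \<open>r > 0\<close>] by simp
  qed
  have "T \<inter> T\<^sub>0 = {}" using components_nonoverlap[OF T(1) \<open>T\<^sub>0 \<in> components (- J)\<close>] T(2) by blast
  then have "T \<subseteq> inside J"
    using \<open>outside J \<subseteq> T\<^sub>0\<close> in_components_subset[OF T(1)] unfolding inside_outside by blast
  moreover have "frontier T = J" using Jordan_Brouwer_frontier[OF hom T(1) dim] .
  ultimately show thesis using that T(1) by blast
qed

lemma arc_chord_homeomorphic_circle:
  fixes S :: "(real^2) set"
  assumes "path_connected S" "t1 \<in> S" "t2 \<in> S" "t1 \<noteq> t2"
    and chord: "closed_segment t1 t2 \<inter> S \<subseteq> {t1, t2}"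
  obtains A where "A \<subseteq> S" "compact A"
    "(A \<union> closed_segment t1 t2) homeomorphic sphere (0::real^2) 1"
proof -
  obtain g0 where "path g0" "path_image g0 \<subseteq> S" "pathstart g0 = t1" "pathfinish g0 = t2"
    using assms(1-3) unfolding path_connected_def by blast
  then obtain g where g: "arc g" "path_image g \<subseteq> S" "pathstart g = t1" "pathfinish g = t2"
    using path_contains_arc[of g0 t1 t2] \<open>t1 \<noteq> t2\<close> by (metis order_trans)
  define c where "c = g +++ linepath t2 t1"
  have "simple_path c" unfolding c_def
  proof (rule simple_path_join_loop)
    show "path_image g \<inter> path_image (linepath t2 t1) \<subseteq> {pathstart g, pathstart (linepath t2 t1)}"
      using g(2,3) chord by (auto simp: closed_segment_commute)
  qed (use g \<open>t1 \<noteq> t2\<close> in auto)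
  moreover have "pathfinish c = pathstart c" using g by (simp add: c_def)
  ultimately have "path_image c homeomorphic sphere (0::complex) 1"
    by (intro homeomorphic_simple_path_image_circle) auto
  also have "sphere (0::complex) 1 homeomorphic sphere (0::real^2) 1"
    by (rule homeomorphic_spheres_gen) auto
  finally have "path_image c homeomorphic sphere (0::real^2) 1" .
  moreover have "path_image c = path_image g \<union> closed_segment t1 t2"
    using g by (simp add: c_def path_image_join closed_segment_commute)
  moreover have "compact (path_image g)" using g(1) by (simp add: arc_imp_path compact_path_image)
  ultimately show thesis using that g(2) by metis
qed

lemma arc_chord_Jordan_domain:
  fixes S K :: "(real^2) set"
  assumes "path_connected S" "convex K" "S \<subseteq> K"
    and "t1 \<in> S" "t2 \<in> S" "t1 \<noteq> t2" and chord: "closed_segment t1 t2 \<inter> S \<subseteq> {t1, t2}"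
  obtains A T where "A \<subseteq> S" "closed A" "T \<in> components (- (A \<union> closed_segment t1 t2))"
    "open T" "T \<subseteq> interior K" "frontier T = A \<union> closed_segment t1 t2"
proof -
  obtain A where A: "A \<subseteq> S" "compact A"
    and hom: "(A \<union> closed_segment t1 t2) homeomorphic sphere (0::real^2) 1"
    using arc_chord_homeomorphic_circle[OF assms(1,4-6) chord] by blast
  define J where "J = A \<union> closed_segment t1 t2"
  obtain T where T: "T \<in> components (- J)" "T \<subseteq> inside J" "frontier T = J"
    using Jordan_Brouwer_inside_component[OF hom[folded J_def]] by auto
  have "J \<subseteq> K" unfolding J_def
    using A(1) \<open>S \<subseteq> K\<close> closed_segment_subset[OF _ _ \<open>convex K\<close>] assms(4,5) by blast
  then have "inside J \<subseteq> K"
    using outside_subset_convex[OF \<open>convex K\<close>] inside_Int_outside by blast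
  moreover have "closed J" unfolding J_def using A(2) by (simp add: compact_imp_closed closed_Un)
  then have "open T" using open_components[OF open_Compl T(1)] by blast
  ultimately have "T \<subseteq> interior K" using T(2) interior_maximal by (metis subset_trans)
  then show thesis
    using that A(1) compact_imp_closed[OF A(2)] T(1,3) \<open>open T\<close> by (auto simp: J_def)
qed

lemma frontier_component_subset_chord:
  fixes S K w :: "(real^2) set"
  assumes "closed S" "path_connected S" "convex K" "S \<subseteq> K"
    and "a \<noteq> 0" and supp: "\<And>x. x \<in> K \<Longrightarrow> a \<bullet> x \<le> \<beta>"
    and "t1 \<in> S" "t2 \<in> S" "t1 \<noteq> t2" and chord: "closed_segment t1 t2 \<inter> S \<subseteq> {t1, t2}"
    and on_line: "closed_segment t1 t2 \<subseteq> {x. a \<bullet> x = \<beta>}"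
    and p: "p \<in> closed_segment t1 t2" "p \<notin> S"
    and w: "w \<in> components (interior K - S)" "p \<in> closure w"
  shows "frontier w - S \<subseteq> closed_segment t1 t2"
proof -
  obtain A T where A: "A \<subseteq> S" "closed A" and T: "T \<in> components (- (A \<union> closed_segment t1 t2))"
    "open T" "T \<subseteq> interior K" "frontier T = A \<union> closed_segment t1 t2"
    using arc_chord_Jordan_domain[OF assms(2-4,7-9) chord] by blast
  have below: "a \<bullet> x < \<beta>" if "x \<in> interior K" for x
    using interior_below_support[OF \<open>a \<noteq> 0\<close> supp that] .
  obtain \<epsilon> where "\<epsilon> > 0" "ball p \<epsilon> \<inter> A = {}"
  proof -
    have "p \<in> - A" "open (- A)" using A p(2) by (auto simp: open_Compl)
    then obtain \<epsilon> where "\<epsilon> > 0" "ball p \<epsilon> \<subseteq> - A" using open_contains_ball by blast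
    then show thesis using that by blast
  qed
  \<comment> \<open>The half-disc \<open>D\<close> avoids the curve; it meets \<open>T\<close> because \<open>p \<in> frontier T\<close>, and meets
    \<open>w\<close> because \<open>p \<in> closure w\<close>. So both \<open>D\<close> and \<open>w\<close> lie in the component \<open>T\<close>.\<close>
  define D where "D = ball p \<epsilon> \<inter> {x. a \<bullet> x < \<beta>}"
  have "connected D" unfolding D_def by (intro convex_connected convex_Int convex_ball convex_halfspace_lt)
  have "D \<subseteq> - (A \<union> closed_segment t1 t2)"
    using \<open>ball p \<epsilon> \<inter> A = {}\<close> on_line by (auto simp: D_def)
  have "p \<in> closure T" using T(4) p(1) by (auto simp: frontier_def)
  then obtain y where "y \<in> T" "dist y p < \<epsilon>" using \<open>\<epsilon> > 0\<close> closure_approachable by blast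
  with below T(3) have "y \<in> D" by (auto simp: D_def dist_commute)
  with \<open>y \<in> T\<close> have "D \<subseteq> T" using components_maximal[OF T(1) \<open>connected D\<close> \<open>D \<subseteq> - (A \<union> closed_segment t1 t2)\<close>] by blast
  have "w \<subseteq> interior K - S" using in_components_subset[OF w(1)] .
  obtain z where "z \<in> w" "dist z p < \<epsilon>" using w(2) \<open>\<epsilon> > 0\<close> closure_approachable by blast
  with below \<open>w \<subseteq> interior K - S\<close> have "z \<in> D" by (auto simp: D_def dist_commute)
  moreover have "w \<subseteq> - (A \<union> closed_segment t1 t2)"
    using \<open>w \<subseteq> interior K - S\<close> below A(1) on_line by fastforce
  ultimately have "w \<subseteq> T"
    using components_maximal[OF T(1) in_components_connected[OF w(1)]] \<open>z \<in> w\<close> \<open>D \<subseteq> T\<close> by blast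
  show ?thesis
  proof
    fix q assume q: "q \<in> frontier w - S"
    then have "q \<notin> interior K"
      using frontier_component_diff_subset_frontier[OF \<open>closed S\<close> w(1)] by (auto simp: frontier_def)
    with T(3) have "q \<notin> T" by blast
    moreover have "q \<in> closure T" using q closure_mono[OF \<open>w \<subseteq> T\<close>] by (auto simp: frontier_def)
    ultimately have "q \<in> A \<union> closed_segment t1 t2" using T(2,4) by (auto simp: frontier_def interior_open)
    with q A(1) show "q \<in> closed_segment t1 t2" by auto
  qed
qed

lemma component_frontier_on_supporting_line:
  fixes S w :: "(real^2) set"
  defines "C \<equiv> convex hull S"
  assumes "closed S" "path_connected S"
    and no_ray: "\<And>x e. e \<noteq> 0 \<Longrightarrow> \<not> ray x e \<subseteq> frontier C"
    and "interior C \<noteq> {}"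
    and w: "w \<in> components (interior C - S)" and p: "p \<in> frontier w" "p \<notin> S"
  shows "\<exists>L. supporting_line L C \<and> frontier w - S \<subseteq> L"
proof -
  have "convex C" by (simp add: C_def)
  have "p \<in> frontier C" using frontier_component_diff_subset_frontier[OF \<open>closed S\<close> w] p by blast
  then obtain a where a: "norm a = 1" "\<And>x. x \<in> closure C \<Longrightarrow> a \<bullet> x \<le> a \<bullet> p"
    using exists_unit_support_normal[OF \<open>convex C\<close> \<open>interior C \<noteq> {}\<close>] by blast
  obtain u where u: "a \<bullet> u = 0" "norm u = 1" "\<And>x. x = (a \<bullet> x) *\<^sub>R a + (u \<bullet> x) *\<^sub>R u"
    using unit_orthogonal_frame_2[OF a(1)] by blast
  have "p \<in> closure C" using \<open>p \<in> frontier C\<close> by (simp add: frontier_def)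
  have "a \<noteq> 0" using a(1) by auto
  have below: "a \<bullet> x < a \<bullet> p" if "x \<in> interior C" for x
    using interior_below_support[OF \<open>a \<noteq> 0\<close> a(2)] that
      convex_interior_closure[OF \<open>convex C\<close>] by simp
  have no_ray_K: "\<not> ray p v \<subseteq> closure C" if "a \<bullet> v = 0" "v \<noteq> 0" for v
  proof
    assume "ray p v \<subseteq> closure C"
    moreover have "ray p v \<inter> interior C = {}"
      using below that(1) by (force simp: ray_def inner_add_right)
    ultimately have "ray p v \<subseteq> frontier C" by (auto simp: frontier_def)
    with no_ray that(2) show False by blast
  qed
  have "u \<noteq> 0" using u(2) by auto
  then have no_ray_u: "\<not> ray p u \<subseteq> closure C" "\<not> ray p (- u) \<subseteq> closure C"
    using no_ray_K[of u] no_ray_K[of "- u"] u(1) by auto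
  obtain t1 t2 where "t1 \<in> S" "t2 \<in> S" "t1 \<noteq> t2" "closed_segment t1 t2 \<inter> S \<subseteq> {t1, t2}"
    and on_line: "closed_segment t1 t2 \<subseteq> {x. a \<bullet> x = a \<bullet> p}" and "p \<in> closed_segment t1 t2"
    using support_line_nearest_points[OF \<open>closed S\<close> \<open>p \<in> closure C\<close>[unfolded C_def] p(2)
        a(2)[unfolded C_def] a(1) u no_ray_u[unfolded C_def]] by blast
  have "frontier w - S \<subseteq> closed_segment t1 t2"
  proof (rule frontier_component_subset_chord[OF \<open>closed S\<close> \<open>path_connected S\<close> \<open>convex C\<close>])
    show "S \<subseteq> C" by (simp add: C_def hull_subset)
    show "a \<noteq> 0" by fact
    show "a \<bullet> x \<le> a \<bullet> p" if "x \<in> C" for x using a(2)[OF closure_subset[THEN subsetD, OF that]] .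
    show "p \<in> closure w" using p(1) by (simp add: frontier_def)
  qed fact+
  moreover have "supporting_line {x. a \<bullet> x = a \<bullet> p} C"
    using supporting_lineI[OF \<open>a \<noteq> 0\<close> _ \<open>p \<in> closure C\<close>] a(2) closure_subset by blast
  ultimately show ?thesis using on_line by blast
qed

theorem mainTheorem6:
  fixes OmO OmI :: "(real^2) set"
  assumes OmO_open: "open OmO" and OmO_ne: "OmO \<noteq> {}" and OmO_sc: "strictly_convex OmO"
    and OmI_closed: "closed OmI" and OmI_sub: "OmI \<subseteq> OmO"
    and A1: "\<forall>x e. e \<noteq> 0 \<longrightarrow> \<not> ray x e \<subseteq> frontier (convex hull OmI)"
    and A2: "closure (convex hull OmI) \<subseteq> OmO"
    and A3a: "interior (convex hull OmI) \<noteq> {}"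
    and A3b: "ray_directions OmO = ray_directions (convex hull OmI)"
    and A4: "\<forall>B. bounded B \<longrightarrow>
               finite {w \<in> components (interior (convex hull OmI) - OmI). w \<inter> B \<noteq> {}}"
    and pc: "path_connected OmI"
  shows "\<forall>w \<in> components (interior (convex hull OmI) - OmI).
           \<exists>L. supporting_line L (convex hull OmI) \<and> frontier w - OmI \<subseteq> L"
proof
  fix w assume w: "w \<in> components (interior (convex hull OmI) - OmI)"
  show "\<exists>L. supporting_line L (convex hull OmI) \<and> frontier w - OmI \<subseteq> L"
  proof (cases "frontier w - OmI = {}")
    case False
    then obtain p where "p \<in> frontier w" "p \<notin> OmI" by blast
    then show ?thesis
      using component_frontier_on_supporting_line[OF OmI_closed pc _ A3a w] A1 by blast
  next
    case True
    have "convex hull OmI \<noteq> UNIV"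
      using A2 closure_subset OmO_sc by (auto simp: strictly_convex_def)
    moreover have "convex hull OmI \<noteq> {}" using A3a interior_subset by blast
    ultimately have "frontier (convex hull OmI) \<noteq> {}" by (simp add: frontier_eq_empty)
    then obtain p where "p \<in> frontier (convex hull OmI)" by blast
    moreover obtain a where "norm a = 1" "\<And>x. x \<in> closure (convex hull OmI) \<Longrightarrow> a \<bullet> x \<le> a \<bullet> p"
      using exists_unit_support_normal[OF convex_convex_hull A3a calculation] by blast
    ultimately have "supporting_line {x. a \<bullet> x = a \<bullet> p} (convex hull OmI)"
      by (intro supporting_lineI) (auto simp: frontier_def closure_subset[THEN subsetD])
    with True show ?thesis by blast
  qed
qed

end
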